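(* Assume the setup below. For every $\mathbf k\in\mathbb N^d$ with $|\mathbf k|>0$, $$\partial^{\mathbf k}H\Big|_{w=0}=\sum_{\substack{\mathbf i,\mathbf j\ne\mathbf 0\\ \mathbf i+\mathbf j=\mathbf k}}\ \sum_{\substack{\mathbf 0\ne\mathbf s\le\mathbf i\\ \mathbf 0\ne\mathbf t\le\mathbf j}}C(\mathbf i,\mathbf j)\,S^{\mathbf i}_{\mathbf s}S^{\mathbf j}_{\mathbf t}\,\mathbb E_x\big[A^{\mathbf s}(x)A^{\mathbf t}(x)\big],$$ where $C(\mathbf i,\mathbf j)=\prod\binom{i_u+j_u}{i_u}$, the product running over all $d$ coordinates $u$ of $\mathbb N^d$, and $\mathbb E_x$ is expectation with respect to $q$.
   Context: Fix integers $r\ge1$ and, for $1\le a\le r$, integers $n_a\ge1$ and $p_a\ge1$; put $d=\sum_{a=1}^r p_a$. An error syndrome is a tuple $\gamma=(\gamma_1,\dots,\gamma_r)$ of functions $\gamma_a:\{1,\dots,n_a\}\to\{0,1,\dots,p_a\}$. Its weight is $\mathrm{wt}(\gamma)=(s^a_b)_{1\le a\le r,\,1\le b\le p_a}\in\mathbb N^d$ with $s^a_b=|\gamma_a^{-1}(b)|$. Multi-indices $\mathbf k=(k^a_b)\in\mathbb N^d$ are indexed the same way; write $\mathbf k^a=(k^a_1,\dots,k^a_{p_a})$, $|\mathbf k^a|=\sum_b k^a_b$, $|\mathbf k|=\sum_a|\mathbf k^a|$, and $\mathbf s\le\mathbf k$ means $s^a_b\le k^a_b$ for all $a,b$. Given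 a finite set $\mathcal Q$ and a function $\pi:\prod_{a=1}^r\{0,\dots,p_a\}^{n_a}\to\mathcal Q$, set $\mathrm{eval}(\pi,\gamma)=\pi(\gamma_1(1),\dots,\gamma_1(n_1),\dots,\gamma_r(1),\dots,\gamma_r(n_r))$ and, for $\tau\in\mathcal Q$, define the polynomial in variables $x^a_b$ ($1\le a\le r$, $0\le b\le p_a$) $$f^\tau_\pi=\sum_\gamma \delta_{\tau=\mathrm{eval}(\pi,\gamma)}\prod_{a=1}^r\prod_{c=1}^{n_a}x^a_{\gamma_a(c)}$$ (sum over all error syndromes). We regard it as a polynomial in $w=(w^a_b)_{1\le a\le r,\,1\le b\le p_a}$ via the substitution $x^a_0=1-\sum_{b=1}^{p_a}w^a_b$, $x^a_b=w^a_b$ for $b\ge1$; the point $w=0$ corresponds to all $x^a_0=1$ and all other $x^a_b=0$. Write $\partial^{\mathbf k}=\prod_{a,b}(\partial/\partial w^a_b)^{k^a_b}$. For $\mathbf s\le\mathbf k$, $$S^{\mathbf k}_{\mathbf s}=\prod_{a=1}^r\Big\{\delta_{n_a\ge|\mathbf k^a|}(-1)^{|\mathbf k^a|-|\mathbf s^a|}\frac{(n_a-|\mathbf s^a|)!}{(n_a-|\mathbf k^a|)!}\prod_{b=1}^{p_a}\frac{k^a_b!}{(k^a_b-s^a_b)!}\Big\},$$ interpreted as $0$ when some $n_a<|\mathbf k^a|$. Further let $I$ be a finite set, $q$ a probability distribution on $I$, $y:I\to\mathcal Q$ a function, and for each $x\in I$ let $\pi_x:\prod_a\{0,\dots,p_a\}^{n_a}\to\mathcal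 Q$ be a function with $\pi_x(0,\dots,0)=y(x)$. Put $g(x,w)=\sum_{\tau\ne y(x)}f^\tau_{\pi_x}(w)$, $H(w)=\sum_{x\in I}q(x)g(x,w)^2$, and $A^{\mathbf s}(x)=|\{\gamma:\mathrm{wt}(\gamma)=\mathbf s,\ \mathrm{eval}(\pi_x,\gamma)\ne y(x)\}|$. (In the paper, $\pi_x$ encodes the computation paths of a universal Turing machine simulating a fixed machine $M$ for $t$ steps on input $x$, $g(x,w)$ is the probability of an output error for the noisy code $w$ near the code of $M$, and $A^{\mathbf s}(x)$ counts weight-$\mathbf s$ error syndromes producing an output error.) *)

theory Defs
  imports "HOL-Analysis.Analysis"
begin

text \<open>Coordinate index set of \<nat>^d: pairs (a,b) with 1 \<le> a \<le> r, 1 \<le> b \<le> p a.\<close>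
definition idx :: "nat \<Rightarrow> (nat \<Rightarrow> nat) \<Rightarrow> (nat \<times> nat) set" where
  "idx r p = {(a,b). a \<in> {1..r} \<and> b \<in> {1..p a}}"

definition idx_list :: "nat \<Rightarrow> (nat \<Rightarrow> nat) \<Rightarrow> (nat \<times> nat) list" where
  "idx_list r p = concat (map (\<lambda>a. map (\<lambda>b. (a,b)) [1..<p a + 1]) [1..<r + 1])"

text \<open>Multi-indices in \<nat>^d: functions on pairs, vanishing outside idx.\<close>
definition multi_indices :: "nat \<Rightarrow> (nat \<Rightarrow> nat) \<Rightarrow> (nat \<times> nat \<Rightarrow> nat) set" where
  "multi_indices r p = {k. \<forall>u. u \<notin> idx r p \<longrightarrow> k u = 0}"

definition mle :: "(nat \<times> nat \<Rightarrow> nat) \<Rightarrow> (nat \<times> nat \<Rightarrow> nat) \<Rightarrow> bool" where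
  "mle s k \<longleftrightarrow> (\<forall>u. s u \<le> k u)"

definition blocksum :: "(nat \<Rightarrow> nat) \<Rightarrow> (nat \<times> nat \<Rightarrow> nat) \<Rightarrow> nat \<Rightarrow> nat" where
  "blocksum p k a = (\<Sum>b\<in>{1..p a}. k (a,b))"

definition msum :: "nat \<Rightarrow> (nat \<Rightarrow> nat) \<Rightarrow> (nat \<times> nat \<Rightarrow> nat) \<Rightarrow> nat" where
  "msum r p k = (\<Sum>a\<in>{1..r}. blocksum p k a)"

text \<open>Error syndromes \<gamma> = (\<gamma>_1,...,\<gamma>_r), encoded as one function \<gamma> a c,
  with \<gamma> a c \<in> {0..p a} for 1 \<le> a \<le> r, 1 \<le> c \<le> n a, and \<gamma> a c = 0 elsewhere.\<close>
definition syndromes :: "nat \<Rightarrow> (nat \<Rightarrow> nat) \<Rightarrow> (nat \<Rightarrow> nat) \<Rightarrow> (nat \<Rightarrow> nat \<Rightarrow> nat) set" where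
  "syndromes r n p = {\<gamma>. \<forall>a c. \<gamma> a c \<le> (if a \<in> {1..r} \<and> c \<in> {1..n a} then p a else 0)}"

definition wt :: "(nat \<Rightarrow> nat) \<Rightarrow> (nat \<Rightarrow> nat \<Rightarrow> nat) \<Rightarrow> (nat \<times> nat \<Rightarrow> nat)" where
  "wt n \<gamma> = (\<lambda>(a,b). if b \<ge> 1 then card {c\<in>{1..n a}. \<gamma> a c = b} else 0)"

text \<open>The variable x^a_b after the substitution x^a_0 = 1 - \<Sum>_b w^a_b, x^a_b = w^a_b.\<close>
definition xvar :: "(nat \<Rightarrow> nat) \<Rightarrow> (nat \<times> nat \<Rightarrow> real) \<Rightarrow> nat \<Rightarrow> nat \<Rightarrow> real" where
  "xvar p w a b = (if b = 0 then 1 - (\<Sum>b'\<in>{1..p a}. w (a,b')) else w (a,b))"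

text \<open>f^\<tau>_\<pi> as a function of w. A map \<pi> on \<Prod>_a {0..p_a}^{n_a} is represented as a
  function on (extensional) error syndromes, so that eval(\<pi>,\<gamma>) = \<pi> \<gamma>.\<close>
definition fpoly :: "nat \<Rightarrow> (nat \<Rightarrow> nat) \<Rightarrow> (nat \<Rightarrow> nat) \<Rightarrow> 'q \<Rightarrow> ((nat \<Rightarrow> nat \<Rightarrow> nat) \<Rightarrow> 'q)
    \<Rightarrow> (nat \<times> nat \<Rightarrow> real) \<Rightarrow> real" where
  "fpoly r n p \<tau> \<pi> w = (\<Sum>\<gamma>\<in>syndromes r n p.
      (if \<tau> = \<pi> \<gamma> then (\<Prod>a\<in>{1..r}. \<Prod>c\<in>{1..n a}. xvar p w a (\<gamma> a c)) else 0))"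

definition pderiv_at :: "nat \<times> nat \<Rightarrow> ((nat \<times> nat \<Rightarrow> real) \<Rightarrow> real) \<Rightarrow> (nat \<times> nat \<Rightarrow> real) \<Rightarrow> real" where
  "pderiv_at u F = (\<lambda>w. deriv (\<lambda>t. F (w(u := t))) (w u))"

definition mderiv :: "nat \<Rightarrow> (nat \<Rightarrow> nat) \<Rightarrow> (nat \<times> nat \<Rightarrow> nat)
    \<Rightarrow> ((nat \<times> nat \<Rightarrow> real) \<Rightarrow> real) \<Rightarrow> (nat \<times> nat \<Rightarrow> real) \<Rightarrow> real" where
  "mderiv r p k F = foldr (\<lambda>u G. (pderiv_at u ^^ k u) G) (idx_list r p) F"

definition Scoef :: "nat \<Rightarrow> (nat \<Rightarrow> nat) \<Rightarrow> (nat \<Rightarrow> nat) \<Rightarrow> (nat \<times> nat \<Rightarrow> nat) \<Rightarrow> (nat \<times> nat \<Rightarrow> nat) \<Rightarrow> real" where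
  "Scoef r n p k s = (\<Prod>a\<in>{1..r}.
     (if n a \<ge> blocksum p k a then
        (-1) ^ (blocksum p k a - blocksum p s a)
        * fact (n a - blocksum p s a) / fact (n a - blocksum p k a)
        * (\<Prod>b\<in>{1..p a}. fact (k (a,b)) / fact (k (a,b) - s (a,b)))
      else 0))"

definition Ccoef :: "nat \<Rightarrow> (nat \<Rightarrow> nat) \<Rightarrow> (nat \<times> nat \<Rightarrow> nat) \<Rightarrow> (nat \<times> nat \<Rightarrow> nat) \<Rightarrow> real" where
  "Ccoef r p i j = (\<Prod>u\<in>idx r p. of_nat ((i u + j u) choose i u))"

definition gerr :: "nat \<Rightarrow> (nat \<Rightarrow> nat) \<Rightarrow> (nat \<Rightarrow> nat) \<Rightarrow> ('i \<Rightarrow> 'q::finite)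
    \<Rightarrow> ('i \<Rightarrow> (nat \<Rightarrow> nat \<Rightarrow> nat) \<Rightarrow> 'q) \<Rightarrow> 'i \<Rightarrow> (nat \<times> nat \<Rightarrow> real) \<Rightarrow> real" where
  "gerr r n p y \<pi> x w = (\<Sum>\<tau>\<in>UNIV - {y x}. fpoly r n p \<tau> (\<pi> x) w)"

definition Hfun :: "nat \<Rightarrow> (nat \<Rightarrow> nat) \<Rightarrow> (nat \<Rightarrow> nat) \<Rightarrow> ('i::finite \<Rightarrow> real) \<Rightarrow> ('i \<Rightarrow> 'q::finite)
    \<Rightarrow> ('i \<Rightarrow> (nat \<Rightarrow> nat \<Rightarrow> nat) \<Rightarrow> 'q) \<Rightarrow> (nat \<times> nat \<Rightarrow> real) \<Rightarrow> real" where
  "Hfun r n p q y \<pi> w = (\<Sum>x\<in>UNIV. q x * (gerr r n p y \<pi> x w)^2)"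

definition Acount :: "nat \<Rightarrow> (nat \<Rightarrow> nat) \<Rightarrow> (nat \<Rightarrow> nat) \<Rightarrow> ('i \<Rightarrow> 'q)
    \<Rightarrow> ('i \<Rightarrow> (nat \<Rightarrow> nat \<Rightarrow> nat) \<Rightarrow> 'q) \<Rightarrow> (nat \<times> nat \<Rightarrow> nat) \<Rightarrow> 'i \<Rightarrow> nat" where
  "Acount r n p y \<pi> s x = card {\<gamma>\<in>syndromes r n p. wt n \<gamma> = s \<and> \<pi> x \<gamma> \<noteq> y x}"

end

theory Submission
  imports Defs
begin

text \<open>
  All functions of \<open>w\<close> involved are polynomials. Writing them explicitly as finite sums of
  monomials \<open>w^m\<close>, partial derivatives act termwise, and \<open>D^k P\<close> at \<open>0\<close> is \<open>k!\<close> times the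
  coefficient of \<open>w^k\<close>; this gives linearity and the Leibniz rule
  \<open>D^k (F G) = \<Sum>i+j=k. C(i,j) D^i F D^j G\<close> at \<open>0\<close>.

  Grouping the factors \<open>x^a_(\<gamma>_a(c))\<close> of a syndrome \<open>\<gamma>\<close> by their value writes its term as
  \<open>\<Prod>a. (x^a_0)^(N_a) * w^(wt \<gamma>)\<close>, with \<open>N_a\<close> the number of zero symbols of \<open>\<gamma>_a\<close>. The derivatives
  of \<open>(x^a_0)^(N_a) = (1 - \<Sum>b. w^a_b)^(N_a)\<close> at \<open>0\<close> are signed falling factorials, so the Leibniz
  rule yields \<open>D^i\<close> of that term at \<open>0\<close> as \<open>S^i_(wt \<gamma>)\<close> if \<open>wt \<gamma> \<le> i\<close> and \<open>0\<close> otherwise. Summing over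
  the syndromes with an output error gives \<open>D^i g(x,0) = \<Sum>0 \<noteq> s \<le> i. S^i_s A^s(x)\<close>; the syndrome
  \<open>0\<close> produces no error, so in particular \<open>g(x,0) = 0\<close>. The Leibniz rule for \<open>g(x,-)^2\<close>, whose terms
  with \<open>i = 0\<close> or \<open>j = 0\<close> therefore vanish, yields the formula.
\<close>

section \<open>Multi-indices and falling factorials\<close>

lemma idx_Sigma: "idx r p = Sigma {1..r} (\<lambda>a. {1..p a})"
  by (auto simp: idx_def)

lemma finite_idx [simp]: "finite (idx r p)"
  by (simp add: idx_Sigma)

lemma set_idx_list: "set (idx_list r p) = idx r p"
  by (force simp: idx_list_def idx_def)

lemma distinct_idx_list: "distinct (idx_list r p)"
proof -
  have "distinct (concat (map (\<lambda>a. map (Pair a) (f a)) xs))"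
    if "distinct xs" "\<And>a. distinct (f a)" for xs :: "nat list" and f :: "nat \<Rightarrow> nat list"
    using that by (induction xs) (auto simp: distinct_map inj_on_def)
  then show ?thesis
    unfolding idx_list_def by simp
qed

lemma multi_indices_outside: "k \<in> multi_indices r p \<Longrightarrow> u \<notin> idx r p \<Longrightarrow> k u = 0"
  unfolding multi_indices_def by blast

lemma multi_indices_eqI:
  assumes "k \<in> multi_indices r p" "m \<in> multi_indices r p" "\<And>u. u \<in> idx r p \<Longrightarrow> k u = m u"
  shows "k = m"
proof
  fix u
  show "k u = m u"
    using assms(3) multi_indices_outside[OF assms(1)] multi_indices_outside[OF assms(2)]
    by (cases "u \<in> idx r p") simp_all
qed

lemma multi_indices_zero [simp]: "(\<lambda>_. 0) \<in> multi_indices r p"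
  by (simp add: multi_indices_def)

lemma multi_indices_add:
  "m1 \<in> multi_indices r p \<Longrightarrow> m2 \<in> multi_indices r p \<Longrightarrow> (\<lambda>u. m1 u + m2 u) \<in> multi_indices r p"
  by (simp add: multi_indices_def)

lemma multi_indices_diff: "k \<in> multi_indices r p \<Longrightarrow> (\<lambda>u. k u - i u) \<in> multi_indices r p"
  by (simp add: multi_indices_def)

lemma mleD: "mle i k \<Longrightarrow> i u \<le> k u"
  unfolding mle_def by blast

lemma multi_indices_mle:
  assumes "k \<in> multi_indices r p" "mle i k"
  shows "i \<in> multi_indices r p"
  unfolding multi_indices_def
proof (intro CollectI allI impI)
  fix u
  assume "u \<notin> idx r p"
  then show "i u = 0"
    using mleD[OF assms(2), of u] multi_indices_outside[OF assms(1)] by simp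
qed

lemma finite_mle:
  assumes "k \<in> multi_indices r p"
  shows "finite {i. mle i k}"
proof (rule finite_subset)
  let ?B = "{0..\<Sum>u\<in>idx r p. k u}"
  show "{i. mle i k} \<subseteq> {f. \<forall>u. (u \<in> idx r p \<longrightarrow> f u \<in> ?B) \<and> (u \<notin> idx r p \<longrightarrow> f u = 0)}"
  proof (intro subsetI CollectI allI conjI impI)
    fix i u
    assume "i \<in> {i. mle i k}"
    then have iu: "i u \<le> k u"
      by (simp add: mleD)
    show "i u \<in> ?B" if "u \<in> idx r p"
      using iu member_le_sum[of u "idx r p" k] that by simp
    show "i u = 0" if "u \<notin> idx r p"
      using iu multi_indices_outside[OF assms that] by simp
  qed
  show "finite {f. \<forall>u. (u \<in> idx r p \<longrightarrow> f u \<in> ?B) \<and> (u \<notin> idx r p \<longrightarrow> f u = 0)}"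
    by (rule finite_set_of_finite_funs) simp_all
qed

lemma mle_diff_diff_cancel: "mle i k \<Longrightarrow> (\<lambda>u. k u - (k u - i u)) = i"
  by (auto simp: mle_def fun_eq_iff)

lemma add_eq_iff_mle_diff:
  "(\<lambda>u. i u + j u) = k \<longleftrightarrow> mle i k \<and> j = (\<lambda>u. k u - i u)"
proof
  assume "(\<lambda>u. i u + j u) = k"
  then have "k u = i u + j u" for u
    by auto
  then show "mle i k \<and> j = (\<lambda>u. k u - i u)"
    by (simp add: mle_def)
next
  assume *: "mle i k \<and> j = (\<lambda>u. k u - i u)"
  then have "i u \<le> k u" for u
    by (blast dest: mleD)
  with * show "(\<lambda>u. i u + j u) = k"
    by (simp add: fun_eq_iff)
qed

lemma diff_eq_iff_mle_diff:
  assumes "mle j i"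
  shows "s = (\<lambda>u. i u - j u) \<longleftrightarrow> mle s i \<and> j = (\<lambda>u. i u - s u)"
proof
  assume s: "s = (\<lambda>u. i u - j u)"
  have "j u \<le> i u" for u
    using assms by (rule mleD)
  with s show "mle s i \<and> j = (\<lambda>u. i u - s u)"
    by (simp add: mle_def fun_eq_iff)
next
  assume *: "mle s i \<and> j = (\<lambda>u. i u - s u)"
  then have "s u \<le> i u" for u
    by (blast dest: mleD)
  with * show "s = (\<lambda>u. i u - j u)"
    by (simp add: fun_eq_iff)
qed

lemma choose_mult_fact_eq_fact_div:
  assumes "s \<le> i"
  shows "real ((i - s + s) choose (i - s)) * fact s = fact i / fact (i - s)"
proof -
  have "i - s + s = i" "i - (i - s) = s"
    using assms by simp_all
  then have "real ((i - s + s) choose (i - s)) = fact i / (fact (i - s) * fact s)"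
    using binomial_fact[of "i - s" i] by simp
  then show ?thesis
    by simp
qed

definition mfact :: "nat \<Rightarrow> (nat \<Rightarrow> nat) \<Rightarrow> (nat \<times> nat \<Rightarrow> nat) \<Rightarrow> real" where
  "mfact r p k = (\<Prod>u\<in>idx r p. fact (k u))"

lemma mfact_split:
  assumes "mle i k"
  shows "mfact r p k = Ccoef r p i (\<lambda>u. k u - i u) * mfact r p i * mfact r p (\<lambda>u. k u - i u)"
proof -
  have fact_split: "fact (k u) = real ((i u + (k u - i u)) choose i u) * fact (i u) * fact (k u - i u)" for u
  proof -
    have "i u \<le> k u"
      using assms by (rule mleD)
    then have "real (fact (k u)) = real (fact (i u) * fact (k u - i u) * (k u choose i u))"
      by (simp only: binomial_fact_lemma)
    with \<open>i u \<le> k u\<close> show ?thesis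
      by simp
  qed
  have "mfact r p k = (\<Prod>u\<in>idx r p. real ((i u + (k u - i u)) choose i u) * fact (i u) * fact (k u - i u))"
    unfolding mfact_def by (rule prod.cong) (simp_all only: fact_split)
  also have "\<dots> = Ccoef r p i (\<lambda>u. k u - i u) * mfact r p i * mfact r p (\<lambda>u. k u - i u)"
    by (simp only: prod.distrib Ccoef_def mfact_def)
  finally show ?thesis .
qed

lemma Ccoef_mult_mfact:
  assumes "mle s i"
  shows "Ccoef r p (\<lambda>u. i u - s u) s * mfact r p s =
    (\<Prod>a\<in>{1..r}. \<Prod>b\<in>{1..p a}. fact (i (a, b)) / fact (i (a, b) - s (a, b)))"
proof -
  have "Ccoef r p (\<lambda>u. i u - s u) s * mfact r p s =
      (\<Prod>u\<in>idx r p. real ((i u - s u + s u) choose (i u - s u)) * fact (s u))"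
    by (simp add: Ccoef_def mfact_def prod.distrib)
  also have "\<dots> = (\<Prod>u\<in>idx r p. fact (i u) / fact (i u - s u))"
    using assms by (intro prod.cong refl choose_mult_fact_eq_fact_div mleD)
  finally show ?thesis
    by (simp add: idx_Sigma prod.Sigma split_beta)
qed

definition falling_fact :: "nat \<Rightarrow> nat \<Rightarrow> real" where
  "falling_fact m l = (\<Prod>i<l. real (m - i))"

lemma falling_fact_0 [simp]: "falling_fact m 0 = 1"
  by (simp add: falling_fact_def)

lemma falling_fact_Suc: "falling_fact m (Suc l) = falling_fact m l * real (m - l)"
  by (simp add: falling_fact_def)

lemma falling_fact_add: "falling_fact m l1 * falling_fact (m - l1) l2 = falling_fact m (l1 + l2)"
  by (induction l2) (simp_all add: falling_fact_Suc falling_fact_def diff_diff_add)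

lemma falling_fact_eq_0: "m < l \<Longrightarrow> falling_fact m l = 0"
  unfolding falling_fact_def by (rule prod_zero) auto

lemma falling_fact_eq_fact_div: "l \<le> m \<Longrightarrow> falling_fact m l = fact m / fact (m - l)"
proof (induction l)
  case (Suc l)
  have fact_eq: "fact (m - l) = real (m - l) * (fact (m - Suc l) :: real)"
  proof -
    have "m - l = Suc (m - Suc l)"
      using Suc.prems by arith
    then show ?thesis
      by (simp only: fact_Suc of_nat_Suc)
  qed
  have "falling_fact m (Suc l) = fact m / (real (m - l) * fact (m - Suc l)) * real (m - l)"
    using Suc by (simp add: falling_fact_Suc fact_eq)
  also have "\<dots> = fact m / fact (m - Suc l)"
    using Suc.prems by simp
  finally show ?case .
qed simp

lemma falling_fact_self: "falling_fact m m = fact m"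
  by (simp add: falling_fact_eq_fact_div)

lemma falling_fact_diff_eq_fact_div:
  assumes "bs \<le> bi" "N + bs = m"
  shows "falling_fact N (bi - bs) = (if bi \<le> m then fact (m - bs) / fact (m - bi) else 0)"
proof (cases "bi \<le> m")
  case True
  have "N = m - bs" "N - (bi - bs) = m - bi"
    using True assms by simp_all
  with True assms show ?thesis
    by (simp add: falling_fact_eq_fact_div)
next
  case False
  with assms show ?thesis
    by (simp add: falling_fact_eq_0)
qed

section \<open>Polynomial functions and their derivatives at the origin\<close>

definition monomial :: "nat \<Rightarrow> (nat \<Rightarrow> nat) \<Rightarrow> (nat \<times> nat \<Rightarrow> nat) \<Rightarrow> (nat \<times> nat \<Rightarrow> real) \<Rightarrow> real" where
  "monomial r p m w = (\<Prod>u\<in>idx r p. w u ^ m u)"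

definition poly_expr :: "nat \<Rightarrow> (nat \<Rightarrow> nat) \<Rightarrow> 'j set \<Rightarrow> ('j \<Rightarrow> real) \<Rightarrow> ('j \<Rightarrow> nat \<times> nat \<Rightarrow> nat)
    \<Rightarrow> (nat \<times> nat \<Rightarrow> real) \<Rightarrow> real" where
  "poly_expr r p J c e w = (\<Sum>j\<in>J. c j * monomial r p (e j) w)"

lemma monomial_zero [simp]: "monomial r p (\<lambda>_. 0) w = 1"
  by (simp add: monomial_def)

lemma monomial_add: "monomial r p (\<lambda>u. m1 u + m2 u) w = monomial r p m1 w * monomial r p m2 w"
  by (simp add: monomial_def power_add prod.distrib)

lemma monomial_unit:
  assumes "u \<in> idx r p"
  shows "monomial r p (\<lambda>v. if v = u then 1 else 0) w = w u"
proof -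
  have "monomial r p (\<lambda>v. if v = u then 1 else 0) w = (\<Prod>v\<in>idx r p. if v = u then w v else 1)"
    unfolding monomial_def by (rule prod.cong) simp_all
  then show ?thesis
    using assms by simp
qed

lemma monomial_cong: "(\<And>u. u \<in> idx r p \<Longrightarrow> m u = m' u) \<Longrightarrow> monomial r p m w = monomial r p m' w"
  unfolding monomial_def by (intro prod.cong) simp_all

lemma monomial_upd:
  assumes "u \<in> idx r p"
  shows "monomial r p m (w(u := t)) = t ^ m u * (\<Prod>v\<in>idx r p - {u}. w v ^ m v)"
proof -
  have "monomial r p m (w(u := t)) = (w(u := t)) u ^ m u * (\<Prod>v\<in>idx r p - {u}. (w(u := t)) v ^ m v)"
    unfolding monomial_def by (rule prod.remove[OF finite_idx assms])
  also have "(\<Prod>v\<in>idx r p - {u}. (w(u := t)) v ^ m v) = (\<Prod>v\<in>idx r p - {u}. w v ^ m v)"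
    by (rule prod.cong) simp_all
  finally show ?thesis
    by (simp only: fun_upd_same)
qed

lemma pderiv_poly_expr:
  assumes u: "u \<in> idx r p" and "finite J"
  shows "pderiv_at u (poly_expr r p J c e) =
    poly_expr r p J (\<lambda>j. c j * real (e j u)) (\<lambda>j. (e j)(u := e j u - 1))"
proof
  fix w :: "nat \<times> nat \<Rightarrow> real"
  let ?R = "\<lambda>j. \<Prod>v\<in>idx r p - {u}. w v ^ e j v"
  have along_u: "poly_expr r p J c e (w(u := t)) = (\<Sum>j\<in>J. c j * (t ^ e j u * ?R j))" for t
    unfolding poly_expr_def by (simp add: monomial_upd[OF u])
  have "((\<lambda>t. \<Sum>j\<in>J. c j * (t ^ e j u * ?R j)) has_real_derivative
      (\<Sum>j\<in>J. c j * (real (e j u) * t ^ (e j u - 1) * ?R j))) (at t)" for t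
    by (auto intro!: derivative_eq_intros sum.cong)
  then have "pderiv_at u (poly_expr r p J c e) w = (\<Sum>j\<in>J. c j * (real (e j u) * w u ^ (e j u - 1) * ?R j))"
    unfolding pderiv_at_def along_u by (rule DERIV_imp_deriv)
  also have "\<dots> = poly_expr r p J (\<lambda>j. c j * real (e j u)) (\<lambda>j. (e j)(u := e j u - 1)) w"
  proof -
    have "(\<Prod>v\<in>idx r p - {u}. w v ^ ((e j)(u := e j u - 1)) v) = ?R j" for j
      by (rule prod.cong) simp_all
    then have "monomial r p ((e j)(u := e j u - 1)) w = w u ^ (e j u - 1) * ?R j" for j
      using monomial_upd[OF u, of "(e j)(u := e j u - 1)" w "w u"] by simp
    then show ?thesis
      unfolding poly_expr_def by (simp add: algebra_simps)
  qed
  finally show "pderiv_at u (poly_expr r p J c e) w =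
      poly_expr r p J (\<lambda>j. c j * real (e j u)) (\<lambda>j. (e j)(u := e j u - 1)) w" .
qed

lemma pderiv_funpow_poly_expr:
  assumes "u \<in> idx r p" and "finite J"
  shows "(pderiv_at u ^^ l) (poly_expr r p J c e) =
    poly_expr r p J (\<lambda>j. c j * falling_fact (e j u) l) (\<lambda>j. (e j)(u := e j u - l))"
proof (induction l)
  case (Suc l)
  have "(pderiv_at u ^^ Suc l) (poly_expr r p J c e) =
      pderiv_at u (poly_expr r p J (\<lambda>j. c j * falling_fact (e j u) l) (\<lambda>j. (e j)(u := e j u - l)))"
    by (simp only: funpow.simps(2) o_apply Suc.IH)
  also have "\<dots> = poly_expr r p J (\<lambda>j. c j * falling_fact (e j u) (Suc l)) (\<lambda>j. (e j)(u := e j u - Suc l))"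
    unfolding pderiv_poly_expr[OF assms]
    by (intro arg_cong2[where f = "poly_expr r p J"]) (simp_all add: fun_eq_iff falling_fact_Suc)
  finally show ?case .
qed simp

lemma foldr_pderiv_poly_expr:
  assumes "distinct L" "set L \<subseteq> idx r p" and "finite J"
  shows "foldr (\<lambda>u G. (pderiv_at u ^^ k u) G) L (poly_expr r p J c e) =
    poly_expr r p J (\<lambda>j. c j * (\<Prod>v\<in>set L. falling_fact (e j v) (k v)))
      (\<lambda>j v. if v \<in> set L then e j v - k v else e j v)"
  using assms(1,2)
proof (induction L)
  case (Cons u L)
  then have u: "u \<in> idx r p" "u \<notin> set L"
    by auto
  have "foldr (\<lambda>u G. (pderiv_at u ^^ k u) G) (u # L) (poly_expr r p J c e) =
      (pderiv_at u ^^ k u) (poly_expr r p J (\<lambda>j. c j * (\<Prod>v\<in>set L. falling_fact (e j v) (k v)))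
        (\<lambda>j v. if v \<in> set L then e j v - k v else e j v))"
    using Cons by simp
  also have "\<dots> = poly_expr r p J (\<lambda>j. c j * (\<Prod>v\<in>set (u # L). falling_fact (e j v) (k v)))
      (\<lambda>j v. if v \<in> set (u # L) then e j v - k v else e j v)"
    unfolding pderiv_funpow_poly_expr[OF u(1) assms(3)]
    by (intro arg_cong2[where f = "poly_expr r p J"]) (use u in \<open>auto simp: fun_eq_iff\<close>)
  finally show ?case .
qed simp

lemma mderiv_poly_expr:
  assumes "finite J"
  shows "mderiv r p k (poly_expr r p J c e) =
    poly_expr r p J (\<lambda>j. c j * (\<Prod>v\<in>idx r p. falling_fact (e j v) (k v))) (\<lambda>j v. e j v - k v)"
proof -
  have "mderiv r p k (poly_expr r p J c e) =
      poly_expr r p J (\<lambda>j. c j * (\<Prod>v\<in>idx r p. falling_fact (e j v) (k v)))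
        (\<lambda>j v. if v \<in> idx r p then e j v - k v else e j v)"
    unfolding mderiv_def using foldr_pderiv_poly_expr[OF distinct_idx_list _ assms]
    by (simp add: set_idx_list)
  also have "\<dots> = poly_expr r p J (\<lambda>j. c j * (\<Prod>v\<in>idx r p. falling_fact (e j v) (k v))) (\<lambda>j v. e j v - k v)"
    unfolding poly_expr_def by (intro ext sum.cong refl arg_cong2[where f = "(*)"] monomial_cong) simp
  finally show ?thesis .
qed

text \<open>If \<open>m \<noteq> k\<close>, either some falling factorial vanishes or a positive power of \<open>0\<close> survives.\<close>
lemma falling_fact_monomial_at_zero:
  assumes "m \<in> multi_indices r p" "k \<in> multi_indices r p"
  shows "(\<Prod>v\<in>idx r p. falling_fact (m v) (k v)) * monomial r p (\<lambda>v. m v - k v) (\<lambda>_. 0) =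
    (if m = k then mfact r p k else 0)"
proof (cases "m = k")
  case True
  then show ?thesis
    by (simp add: falling_fact_self mfact_def)
next
  case False
  then obtain v where v: "v \<in> idx r p" "m v \<noteq> k v"
    using multi_indices_eqI[OF assms] by blast
  show ?thesis
  proof (cases "m v < k v")
    case True
    then have "(\<Prod>v\<in>idx r p. falling_fact (m v) (k v)) = 0"
      using v by (intro prod_zero) (auto intro!: bexI[of _ v] falling_fact_eq_0)
    with False show ?thesis
      by simp
  next
    case False
    with v have "monomial r p (\<lambda>v. m v - k v) (\<lambda>_. 0) = 0"
      unfolding monomial_def by (intro prod_zero) (auto intro!: bexI[of _ v])
    with \<open>m \<noteq> k\<close> show ?thesis
      by simp
  qed
qed

lemma mderiv_poly_expr_at_zero:
  assumes "finite J" "\<And>j. j \<in> J \<Longrightarrow> e j \<in> multi_indices r p" "k \<in> multi_indices r p"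
  shows "mderiv r p k (poly_expr r p J c e) (\<lambda>_. 0) = mfact r p k * (\<Sum>j\<in>{j\<in>J. e j = k}. c j)"
proof -
  have "mderiv r p k (poly_expr r p J c e) (\<lambda>_. 0) = (\<Sum>j\<in>J. c j * (if e j = k then mfact r p k else 0))"
    unfolding mderiv_poly_expr[OF assms(1)] poly_expr_def
    using falling_fact_monomial_at_zero[OF assms(2) assms(3)]
    by (intro sum.cong) (simp_all add: mult.assoc)
  also have "\<dots> = mfact r p k * (\<Sum>j\<in>J. if e j = k then c j else 0)"
    by (auto simp: sum_distrib_left intro!: sum.cong)
  also have "\<dots> = mfact r p k * (\<Sum>j\<in>{j\<in>J. e j = k}. c j)"
    using assms(1) by (simp add: sum.inter_filter)
  finally show ?thesis .
qed

lemma mderiv_zero_index [simp]: "mderiv r p (\<lambda>_. 0) F = F"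
proof -
  have "foldr (\<lambda>u G. (pderiv_at u ^^ 0) G) L F = F" for L :: "(nat \<times> nat) list"
    by (induction L) simp_all
  then show ?thesis
    by (simp add: mderiv_def)
qed

lemma mderiv_monomial_at_zero:
  assumes "s \<in> multi_indices r p" "m \<in> multi_indices r p"
  shows "mderiv r p m (monomial r p s) (\<lambda>_. 0) = (if s = m then mfact r p m else 0)"
proof -
  have "monomial r p s = poly_expr r p {()} (\<lambda>_. 1) (\<lambda>_. s)"
    by (simp add: poly_expr_def fun_eq_iff)
  then show ?thesis
    using assms by (simp add: mderiv_poly_expr_at_zero)
qed

text \<open>Since \<^const>\<open>mderiv\<close> is built from \<^const>\<open>deriv\<close>, it is linear only on differentiable functions;
  linearity and the Leibniz rule are proved for this class.\<close>

definition polynomial_fun :: "nat \<Rightarrow> (nat \<Rightarrow> nat) \<Rightarrow> ((nat \<times> nat \<Rightarrow> real) \<Rightarrow> real) \<Rightarrow> bool" where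
  "polynomial_fun r p F \<longleftrightarrow> (\<exists>M c. finite M \<and> M \<subseteq> multi_indices r p \<and> F = poly_expr r p M c id)"

lemma polynomial_funE:
  assumes "polynomial_fun r p F"
  obtains M c where "finite M" "M \<subseteq> multi_indices r p" "F = poly_expr r p M c id"
  using assms unfolding polynomial_fun_def by blast

lemma poly_expr_image:
  assumes "finite J"
  shows "poly_expr r p J c e = poly_expr r p (e ` J) (\<lambda>m. \<Sum>j\<in>{j\<in>J. e j = m}. c j) id"
proof
  fix w
  have "poly_expr r p J c e w = (\<Sum>m\<in>e ` J. \<Sum>j\<in>{j\<in>J. e j = m}. c j * monomial r p (e j) w)"
    unfolding poly_expr_def by (rule sum.image_gen[OF assms])
  also have "\<dots> = poly_expr r p (e ` J) (\<lambda>m. \<Sum>j\<in>{j\<in>J. e j = m}. c j) id w"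
    unfolding poly_expr_def by (auto simp: sum_distrib_right intro!: sum.cong)
  finally show "poly_expr r p J c e w = poly_expr r p (e ` J) (\<lambda>m. \<Sum>j\<in>{j\<in>J. e j = m}. c j) id w" .
qed

lemma polynomial_funI:
  assumes "finite J" "\<And>j. j \<in> J \<Longrightarrow> e j \<in> multi_indices r p"
  shows "polynomial_fun r p (poly_expr r p J c e)"
  unfolding polynomial_fun_def poly_expr_image[OF assms(1)] using assms by blast

lemma polynomial_fun_monomial:
  assumes "m \<in> multi_indices r p"
  shows "polynomial_fun r p (monomial r p m)"
proof -
  have "monomial r p m = poly_expr r p {()} (\<lambda>_. 1) (\<lambda>_. m)"
    by (simp add: poly_expr_def fun_eq_iff)
  then show ?thesis
    using assms polynomial_funI[of "{()}" "\<lambda>_. m"] by simp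
qed

lemma poly_expr_mult:
  "poly_expr r p J1 c1 e1 w * poly_expr r p J2 c2 e2 w =
    poly_expr r p (J1 \<times> J2) (\<lambda>(j1, j2). c1 j1 * c2 j2) (\<lambda>(j1, j2) u. e1 j1 u + e2 j2 u) w"
  unfolding poly_expr_def sum_product sum.cartesian_product
  by (auto simp: monomial_add intro!: sum.cong)

lemma polynomial_fun_mult:
  assumes "polynomial_fun r p F" "polynomial_fun r p G"
  shows "polynomial_fun r p (\<lambda>w. F w * G w)"
proof -
  obtain M1 c1 where M1: "finite M1" "M1 \<subseteq> multi_indices r p" "F = poly_expr r p M1 c1 id"
    using assms(1) by (rule polynomial_funE)
  obtain M2 c2 where M2: "finite M2" "M2 \<subseteq> multi_indices r p" "G = poly_expr r p M2 c2 id"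
    using assms(2) by (rule polynomial_funE)
  have "(\<lambda>w. F w * G w) = poly_expr r p (M1 \<times> M2) (\<lambda>(j1, j2). c1 j1 * c2 j2) (\<lambda>(j1, j2) u. j1 u + j2 u)"
    using M1 M2 by (simp add: poly_expr_mult)
  then show ?thesis
    using M1 M2 by (auto intro!: polynomial_funI multi_indices_add)
qed

lemma polynomial_fun_prod:
  "finite A \<Longrightarrow> (\<And>a. a \<in> A \<Longrightarrow> polynomial_fun r p (F a)) \<Longrightarrow> polynomial_fun r p (\<lambda>w. \<Prod>a\<in>A. F a w)"
proof (induction A rule: finite_induct)
  case empty
  have "(\<lambda>w. 1) = monomial r p (\<lambda>_. 0)"
    by (simp add: fun_eq_iff)
  then show ?case
    using polynomial_fun_monomial[OF multi_indices_zero] by simp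
next
  case (insert a A)
  then show ?case
    by (simp add: polynomial_fun_mult)
qed

lemma polynomial_fun_power: "polynomial_fun r p F \<Longrightarrow> polynomial_fun r p (\<lambda>w. F w ^ n)"
  using polynomial_fun_prod[of "{..<n}" r p "\<lambda>_. F"] by simp

lemma poly_expr_Sigma:
  assumes "finite X" "\<And>x. x \<in> X \<Longrightarrow> finite (J x)"
  shows "(\<Sum>x\<in>X. a x * poly_expr r p (J x) (c x) (e x) w) =
    poly_expr r p (Sigma X J) (\<lambda>(x, j). a x * c x j) (\<lambda>(x, j). e x j) w"
proof -
  have "(\<Sum>x\<in>X. a x * poly_expr r p (J x) (c x) (e x) w) =
      (\<Sum>x\<in>X. \<Sum>j\<in>J x. a x * c x j * monomial r p (e x j) w)"
    by (simp add: poly_expr_def sum_distrib_left mult.assoc)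
  also have "\<dots> = (\<Sum>(x, j)\<in>Sigma X J. a x * c x j * monomial r p (e x j) w)"
    using assms by (intro sum.Sigma) auto
  finally show ?thesis
    by (simp add: poly_expr_def split_beta)
qed

lemma polynomial_fun_choice:
  assumes "\<And>x. x \<in> X \<Longrightarrow> polynomial_fun r p (F x)"
  obtains M c where
    "\<And>x. x \<in> X \<Longrightarrow> finite (M x)" "\<And>x. x \<in> X \<Longrightarrow> M x \<subseteq> multi_indices r p"
    "\<And>x. x \<in> X \<Longrightarrow> F x = poly_expr r p (M x) (c x) id"
proof -
  have "\<forall>x\<in>X. \<exists>Mc. finite (fst Mc) \<and> fst Mc \<subseteq> multi_indices r p \<and> F x = poly_expr r p (fst Mc) (snd Mc) id"
    using assms unfolding polynomial_fun_def by force
  from bchoice[OF this] obtain Mc where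
    "\<forall>x\<in>X. finite (fst (Mc x)) \<and> fst (Mc x) \<subseteq> multi_indices r p \<and> F x = poly_expr r p (fst (Mc x)) (snd (Mc x)) id"
    by blast
  then show ?thesis
    using that[of "\<lambda>x. fst (Mc x)" "\<lambda>x. snd (Mc x)"] by simp
qed

lemma sum_polynomial_fun_eq_poly_expr_Sigma:
  assumes "finite X" "\<And>x. x \<in> X \<Longrightarrow> finite (M x)" "\<And>x. x \<in> X \<Longrightarrow> F x = poly_expr r p (M x) (c x) id"
  shows "(\<lambda>w. \<Sum>x\<in>X. a x * F x w) = poly_expr r p (Sigma X M) (\<lambda>(x, m). a x * c x m) (\<lambda>(x, m). m)"
proof
  fix w
  have "(\<Sum>x\<in>X. a x * F x w) = (\<Sum>x\<in>X. a x * poly_expr r p (M x) (c x) id w)"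
    using assms(3) by simp
  also have "\<dots> = poly_expr r p (Sigma X M) (\<lambda>(x, m). a x * c x m) (\<lambda>(x, m). m) w"
    using assms(1,2) poly_expr_Sigma[where J = M and e = "\<lambda>_. id"] by (simp add: split_beta)
  finally show "(\<Sum>x\<in>X. a x * F x w) = poly_expr r p (Sigma X M) (\<lambda>(x, m). a x * c x m) (\<lambda>(x, m). m) w" .
qed

lemma polynomial_fun_sum:
  assumes "finite X" "\<And>x. x \<in> X \<Longrightarrow> polynomial_fun r p (F x)"
  shows "polynomial_fun r p (\<lambda>w. \<Sum>x\<in>X. a x * F x w)"
proof (rule polynomial_fun_choice[OF assms(2)])
  fix M c
  assume M: "\<And>x. x \<in> X \<Longrightarrow> finite (M x)" "\<And>x. x \<in> X \<Longrightarrow> M x \<subseteq> multi_indices r p"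
    and F_eq: "\<And>x. x \<in> X \<Longrightarrow> F x = poly_expr r p (M x) (c x) id"
  have "polynomial_fun r p (poly_expr r p (Sigma X M) (\<lambda>(x, m). a x * c x m) (\<lambda>(x, m). m))"
    using M assms(1) by (intro polynomial_funI) auto
  then show ?thesis
    by (simp only: sum_polynomial_fun_eq_poly_expr_Sigma[OF assms(1) M(1) F_eq])
qed

lemma mderiv_sum_at_zero:
  assumes "finite X" "\<And>x. x \<in> X \<Longrightarrow> polynomial_fun r p (F x)" "k \<in> multi_indices r p"
  shows "mderiv r p k (\<lambda>w. \<Sum>x\<in>X. a x * F x w) (\<lambda>_. 0) = (\<Sum>x\<in>X. a x * mderiv r p k (F x) (\<lambda>_. 0))"
proof (rule polynomial_fun_choice[OF assms(2)])
  fix M c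
  assume M: "\<And>x. x \<in> X \<Longrightarrow> finite (M x)" "\<And>x. x \<in> X \<Longrightarrow> M x \<subseteq> multi_indices r p"
    and F_eq: "\<And>x. x \<in> X \<Longrightarrow> F x = poly_expr r p (M x) (c x) id"
  have filter_eq: "{j \<in> Sigma X M. (\<lambda>(x, m). m) j = k} = Sigma X (\<lambda>x. {m \<in> M x. m = k})"
    by auto
  have "mderiv r p k (\<lambda>w. \<Sum>x\<in>X. a x * F x w) (\<lambda>_. 0) =
      mderiv r p k (poly_expr r p (Sigma X M) (\<lambda>(x, m). a x * c x m) (\<lambda>(x, m). m)) (\<lambda>_. 0)"
    by (simp only: sum_polynomial_fun_eq_poly_expr_Sigma[OF assms(1) M(1) F_eq])
  also have "\<dots> = mfact r p k * (\<Sum>(x, m)\<in>Sigma X (\<lambda>x. {m \<in> M x. m = k}). a x * c x m)"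
    unfolding filter_eq[symmetric] using M assms(1,3) by (intro mderiv_poly_expr_at_zero) auto
  also have "\<dots> = (\<Sum>x\<in>X. a x * (mfact r p k * (\<Sum>m\<in>{m \<in> M x. m = k}. c x m)))"
    using M(1) assms(1) by (simp add: sum.Sigma[symmetric] sum_distrib_left mult_ac)
  also have "\<dots> = (\<Sum>x\<in>X. a x * mderiv r p k (F x) (\<lambda>_. 0))"
  proof (intro sum.cong refl arg_cong2[where f = "(*)"])
    fix x
    assume "x \<in> X"
    with M assms(3) show "mfact r p k * (\<Sum>m\<in>{m \<in> M x. m = k}. c x m) = mderiv r p k (F x) (\<lambda>_. 0)"
      unfolding F_eq[OF \<open>x \<in> X\<close>] by (subst mderiv_poly_expr_at_zero) auto
  qed
  finally show ?thesis .
qed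

lemma sum_pairs_adding_to:
  assumes "finite M1" "finite M2" "k \<in> multi_indices r p"
  shows "(\<Sum>(m1, m2)\<in>{(m1, m2) \<in> M1 \<times> M2. (\<lambda>u. m1 u + m2 u) = k}. f m1 m2) =
    (\<Sum>i\<in>{i. mle i k}. \<Sum>m1\<in>{m1 \<in> M1. m1 = i}. \<Sum>m2\<in>{m2 \<in> M2. m2 = (\<lambda>u. k u - i u)}. f m1 m2)"
proof -
  let ?S = "{(m1, m2) \<in> M1 \<times> M2. (\<lambda>u. m1 u + m2 u) = k}"
  have "finite ?S"
    by (rule finite_subset[of _ "M1 \<times> M2"]) (use assms(1,2) in auto)
  moreover have "fst ` ?S \<subseteq> {i. mle i k}"
    by (auto simp: add_eq_iff_mle_diff)
  ultimately have "(\<Sum>(m1, m2)\<in>?S. f m1 m2) = (\<Sum>i\<in>{i. mle i k}. \<Sum>j\<in>{j \<in> ?S. fst j = i}. case_prod f j)"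
    using finite_mle[OF assms(3)] by (intro sum.group[symmetric])
  also have "\<dots> = (\<Sum>i\<in>{i. mle i k}. \<Sum>m1\<in>{m1 \<in> M1. m1 = i}. \<Sum>m2\<in>{m2 \<in> M2. m2 = (\<lambda>u. k u - i u)}. f m1 m2)"
  proof (rule sum.cong[OF refl])
    fix i
    assume "i \<in> {i. mle i k}"
    then have "{j \<in> ?S. fst j = i} = {m1 \<in> M1. m1 = i} \<times> {m2 \<in> M2. m2 = (\<lambda>u. k u - i u)}"
      by (auto simp: add_eq_iff_mle_diff)
    then show "(\<Sum>j\<in>{j \<in> ?S. fst j = i}. case_prod f j) =
        (\<Sum>m1\<in>{m1 \<in> M1. m1 = i}. \<Sum>m2\<in>{m2 \<in> M2. m2 = (\<lambda>u. k u - i u)}. f m1 m2)"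
      by (simp only: sum.cartesian_product[symmetric] prod.case)
  qed
  finally show ?thesis .
qed

lemma mderiv_mult_at_zero:
  assumes "polynomial_fun r p F" "polynomial_fun r p G" "k \<in> multi_indices r p"
  shows "mderiv r p k (\<lambda>w. F w * G w) (\<lambda>_. 0) =
    (\<Sum>i\<in>{i. mle i k}. Ccoef r p i (\<lambda>u. k u - i u) * mderiv r p i F (\<lambda>_. 0) * mderiv r p (\<lambda>u. k u - i u) G (\<lambda>_. 0))"
proof -
  obtain M1 c1 where M1: "finite M1" "M1 \<subseteq> multi_indices r p" and F_eq: "F = poly_expr r p M1 c1 id"
    using assms(1) by (rule polynomial_funE)
  obtain M2 c2 where M2: "finite M2" "M2 \<subseteq> multi_indices r p" and G_eq: "G = poly_expr r p M2 c2 id"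
    using assms(2) by (rule polynomial_funE)
  have dF: "mderiv r p i F (\<lambda>_. 0) = mfact r p i * (\<Sum>m\<in>{m \<in> M1. m = i}. c1 m)"
    if "i \<in> multi_indices r p" for i
    unfolding F_eq using M1 that by (subst mderiv_poly_expr_at_zero) auto
  have dG: "mderiv r p j G (\<lambda>_. 0) = mfact r p j * (\<Sum>m\<in>{m \<in> M2. m = j}. c2 m)"
    if "j \<in> multi_indices r p" for j
    unfolding G_eq using M2 that by (subst mderiv_poly_expr_at_zero) auto
  have "(\<lambda>w. F w * G w) = poly_expr r p (M1 \<times> M2) (\<lambda>(m1, m2). c1 m1 * c2 m2) (\<lambda>(m1, m2) u. m1 u + m2 u)"
    unfolding F_eq G_eq poly_expr_mult by simp
  then have "mderiv r p k (\<lambda>w. F w * G w) (\<lambda>_. 0) =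
      mderiv r p k (poly_expr r p (M1 \<times> M2) (\<lambda>(m1, m2). c1 m1 * c2 m2) (\<lambda>(m1, m2) u. m1 u + m2 u)) (\<lambda>_. 0)"
    by simp
  also have "\<dots> = mfact r p k * (\<Sum>(m1, m2)\<in>{(m1, m2) \<in> M1 \<times> M2. (\<lambda>u. m1 u + m2 u) = k}. c1 m1 * c2 m2)"
  proof -
    have "{j \<in> M1 \<times> M2. (\<lambda>(m1, m2) u. m1 u + m2 u) j = k} = {(m1, m2) \<in> M1 \<times> M2. (\<lambda>u. m1 u + m2 u) = k}"
      by auto
    with M1 M2 assms(3) show ?thesis
      by (subst mderiv_poly_expr_at_zero) (auto intro!: multi_indices_add)
  qed
  also have "\<dots> = mfact r p k * (\<Sum>i\<in>{i. mle i k}.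
      (\<Sum>m1\<in>{m1 \<in> M1. m1 = i}. c1 m1) * (\<Sum>m2\<in>{m2 \<in> M2. m2 = (\<lambda>u. k u - i u)}. c2 m2))"
    by (subst sum_pairs_adding_to[OF M1(1) M2(1) assms(3)]) (simp add: sum_product)
  also have "\<dots> = (\<Sum>i\<in>{i. mle i k}. Ccoef r p i (\<lambda>u. k u - i u) *
      (mfact r p i * (\<Sum>m1\<in>{m1 \<in> M1. m1 = i}. c1 m1)) *
      (mfact r p (\<lambda>u. k u - i u) * (\<Sum>m2\<in>{m2 \<in> M2. m2 = (\<lambda>u. k u - i u)}. c2 m2)))"
    unfolding sum_distrib_left[of "mfact r p k" _ "{i. mle i k}"]
    by (intro sum.cong refl) (simp add: mfact_split[of _ k r p] mult_ac)
  also have "\<dots> = (\<Sum>i\<in>{i. mle i k}. Ccoef r p i (\<lambda>u. k u - i u) * mderiv r p i F (\<lambda>_. 0) *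
      mderiv r p (\<lambda>u. k u - i u) G (\<lambda>_. 0))"
    using assms(3) by (intro sum.cong refl) (simp add: dF dG multi_indices_mle multi_indices_diff)
  finally show ?thesis .
qed

section \<open>Powers of the error-free variables\<close>

definition xvar0_pow :: "nat \<Rightarrow> (nat \<Rightarrow> nat) \<Rightarrow> (nat \<Rightarrow> nat) \<Rightarrow> (nat \<times> nat \<Rightarrow> real) \<Rightarrow> real" where
  "xvar0_pow r p N w = (\<Prod>a\<in>{1..r}. xvar p w a 0 ^ N a)"

lemma xvar0_eq_poly_expr:
  assumes "a \<in> {1..r}"
  shows "xvar p w a 0 =
    poly_expr r p {0..p a} (\<lambda>b. if b = 0 then 1 else -1) (\<lambda>b v. if b \<noteq> 0 \<and> v = (a, b) then 1 else 0) w"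
proof -
  have "monomial r p (\<lambda>v. if b \<noteq> 0 \<and> v = (a, b) then 1 else 0) w = w (a, b)" if "b \<in> {1..p a}" for b
    using monomial_unit[of "(a, b)" r p w] assms that by (simp add: idx_def)
  then have "(\<Sum>b\<in>{1..p a}. - monomial r p (\<lambda>v. if b \<noteq> 0 \<and> v = (a, b) then 1 else 0) w) =
      - (\<Sum>b\<in>{1..p a}. w (a, b))"
    by (simp add: sum_negf)
  moreover have "{0..p a} = insert 0 {1..p a}"
    by auto
  ultimately show ?thesis
    by (simp add: poly_expr_def xvar_def)
qed

lemma polynomial_fun_xvar0_pow: "polynomial_fun r p (xvar0_pow r p N)"
proof -
  have "polynomial_fun r p (\<lambda>w. xvar p w a 0)" if "a \<in> {1..r}" for a
    unfolding xvar0_eq_poly_expr[OF that]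
    using that by (intro polynomial_funI) (auto simp: multi_indices_def idx_def)
  then have "polynomial_fun r p (\<lambda>w. \<Prod>a\<in>{1..r}. xvar p w a 0 ^ N a)"
    by (intro polynomial_fun_prod polynomial_fun_power) simp_all
  then show ?thesis
    by (simp add: xvar0_pow_def[abs_def])
qed

lemma xvar0_upd:
  assumes "(a0, b0) \<in> idx r p"
  shows "xvar p (w((a0, b0) := t)) a 0 = (if a = a0 then xvar p w a0 0 + w (a0, b0) - t else xvar p w a 0)"
proof (cases "a = a0")
  case True
  have b0: "b0 \<in> {1..p a0}"
    using assms by (simp add: idx_def)
  have "(\<Sum>b\<in>{1..p a0}. (w((a0, b0) := t)) (a0, b)) = t + (\<Sum>b\<in>{1..p a0} - {b0}. w (a0, b))"
    using b0 by (simp add: sum.remove)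
  moreover have "(\<Sum>b\<in>{1..p a0}. w (a0, b)) = w (a0, b0) + (\<Sum>b\<in>{1..p a0} - {b0}. w (a0, b))"
    using b0 by (simp add: sum.remove)
  ultimately show ?thesis
    using True by (simp add: xvar_def)
qed (simp add: xvar_def)

lemma xvar0_pow_remove:
  assumes "a0 \<in> {1..r}"
  shows "xvar0_pow r p N w = xvar p w a0 0 ^ N a0 * (\<Prod>a\<in>{1..r} - {a0}. xvar p w a 0 ^ N a)"
  unfolding xvar0_pow_def using assms by (simp add: prod.remove)

lemma pderiv_xvar0_pow:
  assumes "u \<in> idx r p"
  shows "pderiv_at u (\<lambda>w. c * xvar0_pow r p N w) =
    (\<lambda>w. c * - real (N (fst u)) * xvar0_pow r p (N(fst u := N (fst u) - 1)) w)"
proof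
  fix w :: "nat \<times> nat \<Rightarrow> real"
  obtain a0 b0 where u: "u = (a0, b0)"
    by force
  have a0: "a0 \<in> {1..r}"
    using assms u by (simp add: idx_def)
  let ?K = "xvar p w a0 0 + w u"
  let ?R = "\<Prod>a\<in>{1..r} - {a0}. xvar p w a 0 ^ N a"
  have along_u: "c * xvar0_pow r p N (w(u := t)) = c * ((?K - t) ^ N a0 * ?R)" for t
  proof -
    have "(\<Prod>a\<in>{1..r} - {a0}. xvar p (w(u := t)) a 0 ^ N a) = ?R"
      by (rule prod.cong) (use assms u in \<open>simp_all add: xvar0_upd\<close>)
    then show ?thesis
      unfolding xvar0_pow_remove[OF a0] using assms u by (simp add: xvar0_upd)
  qed
  have "((\<lambda>t. c * ((?K - t) ^ N a0 * ?R)) has_real_derivative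
      c * (real (N a0) * (?K - t) ^ (N a0 - 1) * -1 * ?R)) (at t)" for t
    by (auto intro!: derivative_eq_intros)
  then have "pderiv_at u (\<lambda>w. c * xvar0_pow r p N w) w = c * (real (N a0) * (?K - w u) ^ (N a0 - 1) * -1 * ?R)"
    unfolding pderiv_at_def along_u by (rule DERIV_imp_deriv)
  also have "\<dots> = c * - real (N (fst u)) * xvar0_pow r p (N(fst u := N (fst u) - 1)) w"
  proof -
    have "(\<Prod>a\<in>{1..r} - {a0}. xvar p w a 0 ^ (N(a0 := N a0 - 1)) a) = ?R"
      by (rule prod.cong) simp_all
    then show ?thesis
      unfolding xvar0_pow_remove[OF a0] using u by simp
  qed
  finally show "pderiv_at u (\<lambda>w. c * xvar0_pow r p N w) w =
      c * - real (N (fst u)) * xvar0_pow r p (N(fst u := N (fst u) - 1)) w" .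
qed

lemma pderiv_funpow_xvar0_pow:
  assumes "u \<in> idx r p"
  shows "(pderiv_at u ^^ l) (\<lambda>w. c * xvar0_pow r p N w) =
    (\<lambda>w. c * ((-1) ^ l * falling_fact (N (fst u)) l) * xvar0_pow r p (N(fst u := N (fst u) - l)) w)"
proof (induction l)
  case (Suc l)
  have "(pderiv_at u ^^ Suc l) (\<lambda>w. c * xvar0_pow r p N w) =
      pderiv_at u (\<lambda>w. c * ((-1) ^ l * falling_fact (N (fst u)) l) * xvar0_pow r p (N(fst u := N (fst u) - l)) w)"
    by (simp only: funpow.simps(2) o_apply Suc.IH)
  also have "\<dots> = (\<lambda>w. c * ((-1) ^ Suc l * falling_fact (N (fst u)) (Suc l)) *
      xvar0_pow r p (N(fst u := N (fst u) - Suc l)) w)"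
    unfolding pderiv_xvar0_pow[OF assms] by (simp add: fun_eq_iff falling_fact_Suc)
  finally show ?case .
qed simp

definition blocksum_on :: "(nat \<times> nat \<Rightarrow> nat) \<Rightarrow> (nat \<times> nat) set \<Rightarrow> nat \<Rightarrow> nat" where
  "blocksum_on k S a = (\<Sum>v\<in>{v \<in> S. fst v = a}. k v)"

lemma blocksum_on_insert:
  assumes "finite S" "u \<notin> S"
  shows "blocksum_on k (insert u S) a = blocksum_on k S a + (if fst u = a then k u else 0)"
proof -
  have "{v \<in> insert u S. fst v = a} = (if fst u = a then insert u {v \<in> S. fst v = a} else {v \<in> S. fst v = a})"
    by auto
  then show ?thesis
    using assms by (simp add: blocksum_on_def)
qed

lemma blocksum_on_idx:
  assumes "a \<in> {1..r}"
  shows "blocksum_on k (idx r p) a = blocksum p k a"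
proof -
  have "{v \<in> idx r p. fst v = a} = Pair a ` {1..p a}"
    using assms by (auto simp: idx_def)
  then show ?thesis
    by (simp add: blocksum_on_def blocksum_def sum.reindex inj_on_def)
qed

lemma prod_signed_falling_fact_shift:
  fixes r :: nat
  assumes "a0 \<in> {1..r}" "\<And>a. B' a = B a + (if a = a0 then l else 0)"
  shows "(\<Prod>a\<in>{1..r}. (-1) ^ B' a * falling_fact (N a) (B' a)) =
    (\<Prod>a\<in>{1..r}. (-1) ^ B a * falling_fact (N a) (B a)) * ((-1) ^ l * falling_fact (N a0 - B a0) l)"
proof -
  let ?f = "\<lambda>B a. (-1) ^ B a * falling_fact (N a) (B a)"
  have "(\<Prod>a\<in>{1..r}. ?f B' a) = ?f B' a0 * (\<Prod>a\<in>{1..r} - {a0}. ?f B' a)"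
    by (rule prod.remove[OF finite_atLeastAtMost assms(1)])
  also have "(\<Prod>a\<in>{1..r} - {a0}. ?f B' a) = (\<Prod>a\<in>{1..r} - {a0}. ?f B a)"
    by (rule prod.cong) (simp_all add: assms(2))
  also have "?f B' a0 = ?f B a0 * ((-1) ^ l * falling_fact (N a0 - B a0) l)"
    by (simp add: assms(2) power_add falling_fact_add[symmetric])
  finally show ?thesis
    using prod.remove[OF finite_atLeastAtMost assms(1), of "?f B"] by (simp add: mult_ac)
qed

lemma foldr_pderiv_xvar0_pow:
  assumes "distinct L" "set L \<subseteq> idx r p"
  shows "foldr (\<lambda>u G. (pderiv_at u ^^ k u) G) L (\<lambda>w. c * xvar0_pow r p N w) =
    (\<lambda>w. c * (\<Prod>a\<in>{1..r}. (-1) ^ blocksum_on k (set L) a * falling_fact (N a) (blocksum_on k (set L) a)) *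
      xvar0_pow r p (\<lambda>a. N a - blocksum_on k (set L) a) w)"
  using assms
proof (induction L)
  case Nil
  then show ?case
    by (simp add: blocksum_on_def)
next
  case (Cons u L)
  obtain a0 b0 where u: "u = (a0, b0)"
    by force
  have "u \<in> idx r p" "u \<notin> set L"
    using Cons.prems by auto
  then have a0: "a0 \<in> {1..r}"
    using u by (simp add: idx_def)
  let ?B = "blocksum_on k (set L)"
  let ?B' = "blocksum_on k (insert u (set L))"
  let ?P = "\<lambda>B. \<Prod>a\<in>{1..r}. (-1) ^ B a * falling_fact (N a) (B a)"
  have B': "?B' a = ?B a + (if a = a0 then k u else 0)" for a
    using \<open>u \<notin> set L\<close> u by (simp add: blocksum_on_insert)
  then have exponents: "(\<lambda>a. N a - ?B a)(a0 := N a0 - ?B a0 - k u) = (\<lambda>a. N a - ?B' a)"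
    by (auto simp: fun_eq_iff)
  have "foldr (\<lambda>u G. (pderiv_at u ^^ k u) G) (u # L) (\<lambda>w. c * xvar0_pow r p N w) =
      (pderiv_at u ^^ k u) (\<lambda>w. (c * ?P ?B) * xvar0_pow r p (\<lambda>a. N a - ?B a) w)"
    using Cons by (simp add: mult.assoc)
  also have "\<dots> = (\<lambda>w. c * (?P ?B * ((-1) ^ k u * falling_fact (N a0 - ?B a0) (k u))) *
      xvar0_pow r p ((\<lambda>a. N a - ?B a)(a0 := N a0 - ?B a0 - k u)) w)"
    unfolding pderiv_funpow_xvar0_pow[OF \<open>u \<in> idx r p\<close>] using u by (simp add: mult.assoc)
  also have "\<dots> = (\<lambda>w. c * ?P ?B' * xvar0_pow r p (\<lambda>a. N a - ?B' a) w)"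
    unfolding exponents prod_signed_falling_fact_shift[OF a0 B', symmetric] ..
  finally show ?case
    by simp
qed

lemma xvar0_pow_at_zero [simp]: "xvar0_pow r p N (\<lambda>_. 0) = 1"
  by (simp add: xvar0_pow_def xvar_def)

lemma mderiv_xvar0_pow_at_zero:
  "mderiv r p m (xvar0_pow r p N) (\<lambda>_. 0) =
    (\<Prod>a\<in>{1..r}. (-1) ^ blocksum p m a * falling_fact (N a) (blocksum p m a))"
proof -
  have "mderiv r p m (\<lambda>w. 1 * xvar0_pow r p N w) (\<lambda>_. 0) =
      (\<Prod>a\<in>{1..r}. (-1) ^ blocksum_on m (idx r p) a * falling_fact (N a) (blocksum_on m (idx r p) a))"
    unfolding mderiv_def using foldr_pderiv_xvar0_pow[OF distinct_idx_list, where k = m and c = 1 and N = N]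
    by (simp add: set_idx_list)
  also have "\<dots> = (\<Prod>a\<in>{1..r}. (-1) ^ blocksum p m a * falling_fact (N a) (blocksum p m a))"
    by (rule prod.cong) (simp_all add: blocksum_on_idx)
  finally show ?thesis
    by simp
qed

lemma mderiv_xvar0_pow_mult_monomial_at_zero:
  assumes "s \<in> multi_indices r p" "i \<in> multi_indices r p"
  shows "mderiv r p i (\<lambda>w. xvar0_pow r p N w * monomial r p s w) (\<lambda>_. 0) =
    (if mle s i
     then Ccoef r p (\<lambda>u. i u - s u) s * mderiv r p (\<lambda>u. i u - s u) (xvar0_pow r p N) (\<lambda>_. 0) * mfact r p s
     else 0)"
proof -
  let ?D = "\<lambda>j. Ccoef r p j (\<lambda>u. i u - j u) * mderiv r p j (xvar0_pow r p N) (\<lambda>_. 0)"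
  have "mderiv r p i (\<lambda>w. xvar0_pow r p N w * monomial r p s w) (\<lambda>_. 0) =
      (\<Sum>j\<in>{j. mle j i}. ?D j * mderiv r p (\<lambda>u. i u - j u) (monomial r p s) (\<lambda>_. 0))"
    using assms by (simp add: mderiv_mult_at_zero polynomial_fun_xvar0_pow polynomial_fun_monomial)
  also have "\<dots> = (\<Sum>j\<in>{j. mle j i}. if mle s i \<and> j = (\<lambda>u. i u - s u) then ?D j * mfact r p s else 0)"
  proof (rule sum.cong[OF refl])
    fix j
    assume "j \<in> {j. mle j i}"
    then have ji: "mle j i"
      by simp
    have "mderiv r p (\<lambda>u. i u - j u) (monomial r p s) (\<lambda>_. 0) = (if s = (\<lambda>u. i u - j u) then mfact r p s else 0)"
      using assms by (simp add: mderiv_monomial_at_zero multi_indices_diff)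
    then show "?D j * mderiv r p (\<lambda>u. i u - j u) (monomial r p s) (\<lambda>_. 0) =
        (if mle s i \<and> j = (\<lambda>u. i u - s u) then ?D j * mfact r p s else 0)"
      by (simp add: diff_eq_iff_mle_diff[OF ji])
  qed
  also have "\<dots> = (if mle s i then ?D (\<lambda>u. i u - s u) * mfact r p s else 0)"
  proof -
    have "mle (\<lambda>u. i u - s u) i"
      by (simp add: mle_def)
    then show ?thesis
      using finite_mle[OF assms(2)] by (simp add: sum.delta')
  qed
  finally show ?thesis
    by (simp add: mle_diff_diff_cancel)
qed

section \<open>Error syndromes\<close>

definition syndrome_monomial :: "nat \<Rightarrow> (nat \<Rightarrow> nat) \<Rightarrow> (nat \<Rightarrow> nat) \<Rightarrow> (nat \<Rightarrow> nat \<Rightarrow> nat)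
    \<Rightarrow> (nat \<times> nat \<Rightarrow> real) \<Rightarrow> real" where
  "syndrome_monomial r n p \<gamma> w = (\<Prod>a\<in>{1..r}. \<Prod>c\<in>{1..n a}. xvar p w a (\<gamma> a c))"

definition zero_count :: "(nat \<Rightarrow> nat) \<Rightarrow> (nat \<Rightarrow> nat \<Rightarrow> nat) \<Rightarrow> nat \<Rightarrow> nat" where
  "zero_count n \<gamma> a = card {c \<in> {1..n a}. \<gamma> a c = 0}"

lemma syndromes_bound:
  "\<gamma> \<in> syndromes r n p \<Longrightarrow> \<gamma> a c \<le> (if a \<in> {1..r} \<and> c \<in> {1..n a} then p a else 0)"
  unfolding syndromes_def by blast

lemma syndromes_le: "\<gamma> \<in> syndromes r n p \<Longrightarrow> a \<in> {1..r} \<Longrightarrow> c \<in> {1..n a} \<Longrightarrow> \<gamma> a c \<le> p a"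
  using syndromes_bound[of \<gamma> r n p a c] by simp

lemma syndromes_outside: "\<gamma> \<in> syndromes r n p \<Longrightarrow> \<not> (a \<in> {1..r} \<and> c \<in> {1..n a}) \<Longrightarrow> \<gamma> a c = 0"
  using syndromes_bound[of \<gamma> r n p a c] by (auto split: if_split_asm)

lemma finite_syndromes: "finite (syndromes r n p)"
proof -
  let ?D = "SIGMA a:{1..r}. {1..n a}"
  let ?F = "{f. \<forall>x. (x \<in> ?D \<longrightarrow> f x \<in> {0..\<Sum>a\<in>{1..r}. p a}) \<and> (x \<notin> ?D \<longrightarrow> f x = 0)}"
  have in_F: "case_prod \<gamma> \<in> ?F" if \<gamma>: "\<gamma> \<in> syndromes r n p" for \<gamma>
  proof (intro CollectI allI conjI impI)
    fix x :: "nat \<times> nat"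
    obtain a c where x: "x = (a, c)"
      by force
    show "case_prod \<gamma> x \<in> {0..\<Sum>a\<in>{1..r}. p a}" if "x \<in> ?D"
    proof -
      have ac: "a \<in> {1..r}" "c \<in> {1..n a}"
        using that x by auto
      have "\<gamma> a c \<le> p a"
        using syndromes_le[OF \<gamma> ac] .
      also have "p a \<le> (\<Sum>a\<in>{1..r}. p a)"
        using ac by (intro member_le_sum) simp_all
      finally show ?thesis
        using x by simp
    qed
    show "case_prod \<gamma> x = 0" if "x \<notin> ?D"
      using that x syndromes_outside[OF \<gamma>, of a c] by simp
  qed
  have "syndromes r n p \<subseteq> curry ` ?F"
  proof
    fix \<gamma>
    assume "\<gamma> \<in> syndromes r n p"
    then have "case_prod \<gamma> \<in> ?F"
      by (rule in_F)
    then show "\<gamma> \<in> curry ` ?F"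
      by (rule image_eqI[rotated]) simp
  qed
  moreover have "finite (curry ` ?F)"
    by (intro finite_imageI finite_set_of_finite_funs) auto
  ultimately show ?thesis
    by (rule finite_subset)
qed

lemma wt_in_multi_indices:
  assumes "\<gamma> \<in> syndromes r n p"
  shows "wt n \<gamma> \<in> multi_indices r p"
  unfolding multi_indices_def
proof (intro CollectI allI impI)
  fix u
  assume u: "u \<notin> idx r p"
  obtain a b where ab: "u = (a, b)"
    by force
  have "\<gamma> a c \<noteq> b" if "b \<ge> 1" "c \<in> {1..n a}" for c
    using u ab that syndromes_le[OF assms, of a c] syndromes_outside[OF assms, of a c]
    by (cases "a \<in> {1..r}") (auto simp: idx_def)
  then show "wt n \<gamma> u = 0"
    using ab by (auto simp: wt_def)
qed

lemma wt_eq_zero_imp_zero_syndrome: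
  assumes "\<gamma> \<in> syndromes r n p" "wt n \<gamma> = (\<lambda>_. 0)"
  shows "\<gamma> = (\<lambda>a c. 0)"
proof (rule ccontr)
  assume "\<gamma> \<noteq> (\<lambda>a c. 0)"
  then obtain a c where ne: "\<gamma> a c \<noteq> 0"
    by (auto simp: fun_eq_iff)
  then have "c \<in> {c' \<in> {1..n a}. \<gamma> a c' = \<gamma> a c}"
    using syndromes_outside[OF assms(1), of a c] by auto
  then have "wt n \<gamma> (a, \<gamma> a c) \<noteq> 0"
    using ne by (auto simp: wt_def)
  with assms(2) show False
    by simp
qed

lemma prod_by_value:
  assumes "finite C" "finite V" "g ` C \<subseteq> V"
  shows "(\<Prod>c\<in>C. h (g c)) = (\<Prod>v\<in>V. h v ^ card {c \<in> C. g c = v})"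
proof -
  have "(\<Prod>c\<in>C. h (g c)) = (\<Prod>v\<in>V. \<Prod>c\<in>{c \<in> C. g c = v}. h (g c))"
    by (rule prod.group[OF assms, symmetric])
  also have "\<dots> = (\<Prod>v\<in>V. h v ^ card {c \<in> C. g c = v})"
    by (intro prod.cong refl) simp
  finally show ?thesis .
qed

lemma zero_count_add_blocksum_wt:
  assumes "\<gamma> \<in> syndromes r n p" "a \<in> {1..r}"
  shows "zero_count n \<gamma> a + blocksum p (wt n \<gamma>) a = n a"
proof -
  have "\<gamma> a ` {1..n a} \<subseteq> {0..p a}"
    using syndromes_le[OF assms] by auto
  then have "n a = (\<Sum>v\<in>{0..p a}. card {c \<in> {1..n a}. \<gamma> a c = v})"
    using sum.group[of "{1..n a}" "{0..p a}" "\<gamma> a" "\<lambda>_. 1::nat"] by simp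
  also have "{0..p a} = insert 0 {1..p a}"
    by auto
  finally show ?thesis
    by (simp add: zero_count_def blocksum_def wt_def)
qed

lemma syndrome_monomial_eq:
  assumes "\<gamma> \<in> syndromes r n p"
  shows "syndrome_monomial r n p \<gamma> w = xvar0_pow r p (zero_count n \<gamma>) w * monomial r p (wt n \<gamma>) w"
proof -
  have block: "(\<Prod>c\<in>{1..n a}. xvar p w a (\<gamma> a c)) =
      xvar p w a 0 ^ zero_count n \<gamma> a * (\<Prod>b\<in>{1..p a}. w (a, b) ^ wt n \<gamma> (a, b))"
    if a: "a \<in> {1..r}" for a
  proof -
    have "\<gamma> a ` {1..n a} \<subseteq> {0..p a}"
      using syndromes_le[OF assms a] by auto
    then have "(\<Prod>c\<in>{1..n a}. xvar p w a (\<gamma> a c)) =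
        (\<Prod>v\<in>{0..p a}. xvar p w a v ^ card {c \<in> {1..n a}. \<gamma> a c = v})"
      by (intro prod_by_value) simp_all
    also have "{0..p a} = insert 0 {1..p a}"
      by auto
    finally show ?thesis
      by (simp add: zero_count_def wt_def xvar_def)
  qed
  have "syndrome_monomial r n p \<gamma> w =
      (\<Prod>a\<in>{1..r}. xvar p w a 0 ^ zero_count n \<gamma> a * (\<Prod>b\<in>{1..p a}. w (a, b) ^ wt n \<gamma> (a, b)))"
    unfolding syndrome_monomial_def by (intro prod.cong refl block) simp
  also have "\<dots> = xvar0_pow r p (zero_count n \<gamma>) w * monomial r p (wt n \<gamma>) w"
    by (simp add: prod.distrib xvar0_pow_def monomial_def idx_Sigma prod.Sigma split_beta)
  finally show ?thesis .
qed

lemma Ccoef_falling_fact_mfact_eq_Scoef: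
  assumes "mle s i" "\<And>a. a \<in> {1..r} \<Longrightarrow> N a + blocksum p s a = n a"
  shows "Ccoef r p (\<lambda>u. i u - s u) s *
      (\<Prod>a\<in>{1..r}. (-1) ^ blocksum p (\<lambda>u. i u - s u) a * falling_fact (N a) (blocksum p (\<lambda>u. i u - s u) a)) *
      mfact r p s = Scoef r n p i s"
proof -
  have block_diff: "blocksum p (\<lambda>u. i u - s u) a = blocksum p i a - blocksum p s a"
    and block_le: "blocksum p s a \<le> blocksum p i a" for a
    unfolding blocksum_def using mleD[OF assms(1)]
    by (simp_all add: sum_subtractf_nat sum_mono)
  have "Ccoef r p (\<lambda>u. i u - s u) s *
      (\<Prod>a\<in>{1..r}. (-1) ^ blocksum p (\<lambda>u. i u - s u) a * falling_fact (N a) (blocksum p (\<lambda>u. i u - s u) a)) *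
      mfact r p s =
      (\<Prod>a\<in>{1..r}. (-1) ^ (blocksum p i a - blocksum p s a) *
        falling_fact (N a) (blocksum p i a - blocksum p s a)) * (Ccoef r p (\<lambda>u. i u - s u) s * mfact r p s)"
    by (simp only: block_diff mult_ac)
  also have "\<dots> = (\<Prod>a\<in>{1..r}. (-1) ^ (blocksum p i a - blocksum p s a) *
        falling_fact (N a) (blocksum p i a - blocksum p s a) *
        (\<Prod>b\<in>{1..p a}. fact (i (a, b)) / fact (i (a, b) - s (a, b))))"
    by (simp only: Ccoef_mult_mfact[OF assms(1)] prod.distrib)
  also have "\<dots> = Scoef r n p i s"
    unfolding Scoef_def
    using falling_fact_diff_eq_fact_div[OF block_le assms(2)] by (intro prod.cong refl) simp
  finally show ?thesis .
qed

lemma mderiv_syndrome_monomial_at_zero: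
  assumes "\<gamma> \<in> syndromes r n p" "i \<in> multi_indices r p"
  shows "mderiv r p i (syndrome_monomial r n p \<gamma>) (\<lambda>_. 0) =
    (if mle (wt n \<gamma>) i then Scoef r n p i (wt n \<gamma>) else 0)"
proof -
  have "syndrome_monomial r n p \<gamma> = (\<lambda>w. xvar0_pow r p (zero_count n \<gamma>) w * monomial r p (wt n \<gamma>) w)"
    using syndrome_monomial_eq[OF assms(1)] by blast
  moreover have "mle (wt n \<gamma>) i \<Longrightarrow>
      Ccoef r p (\<lambda>u. i u - wt n \<gamma> u) (wt n \<gamma>) *
      mderiv r p (\<lambda>u. i u - wt n \<gamma> u) (xvar0_pow r p (zero_count n \<gamma>)) (\<lambda>_. 0) *
      mfact r p (wt n \<gamma>) = Scoef r n p i (wt n \<gamma>)"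
    unfolding mderiv_xvar0_pow_at_zero by (rule Ccoef_falling_fact_mfact_eq_Scoef) (simp_all add: zero_count_add_blocksum_wt[OF assms(1)])
  ultimately show ?thesis
    using assms by (simp add: mderiv_xvar0_pow_mult_monomial_at_zero wt_in_multi_indices)
qed

section \<open>Derivatives of the error probability and of \<open>H\<close>\<close>

lemma gerr_eq_sum:
  "gerr r n p y \<pi> x w = (\<Sum>\<gamma>\<in>{\<gamma> \<in> syndromes r n p. \<pi> x \<gamma> \<noteq> y x}. syndrome_monomial r n p \<gamma> w)"
proof -
  have "gerr r n p y \<pi> x w =
      (\<Sum>\<tau>\<in>UNIV - {y x}. \<Sum>\<gamma>\<in>syndromes r n p. if \<tau> = \<pi> x \<gamma> then syndrome_monomial r n p \<gamma> w else 0)"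
    unfolding gerr_def fpoly_def syndrome_monomial_def by simp
  also have "\<dots> = (\<Sum>\<gamma>\<in>syndromes r n p. \<Sum>\<tau>\<in>UNIV - {y x}. if \<tau> = \<pi> x \<gamma> then syndrome_monomial r n p \<gamma> w else 0)"
    by (rule sum.swap)
  also have "\<dots> = (\<Sum>\<gamma>\<in>syndromes r n p. if \<pi> x \<gamma> \<noteq> y x then syndrome_monomial r n p \<gamma> w else 0)"
    by (intro sum.cong refl) simp
  also have "\<dots> = (\<Sum>\<gamma>\<in>{\<gamma> \<in> syndromes r n p. \<pi> x \<gamma> \<noteq> y x}. syndrome_monomial r n p \<gamma> w)"
    by (simp add: sum.inter_filter[OF finite_syndromes])
  finally show ?thesis .
qed

lemma polynomial_fun_syndrome_monomial:
  assumes "\<gamma> \<in> syndromes r n p"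
  shows "polynomial_fun r p (syndrome_monomial r n p \<gamma>)"
proof -
  have "polynomial_fun r p (\<lambda>w. xvar0_pow r p (zero_count n \<gamma>) w * monomial r p (wt n \<gamma>) w)"
    using assms by (intro polynomial_fun_mult polynomial_fun_xvar0_pow polynomial_fun_monomial wt_in_multi_indices)
  moreover have "syndrome_monomial r n p \<gamma> = (\<lambda>w. xvar0_pow r p (zero_count n \<gamma>) w * monomial r p (wt n \<gamma>) w)"
    using syndrome_monomial_eq[OF assms] by blast
  ultimately show ?thesis
    by simp
qed

lemma polynomial_fun_gerr: "polynomial_fun r p (gerr r n p y \<pi> x)"
  using polynomial_fun_sum[of "{\<gamma> \<in> syndromes r n p. \<pi> x \<gamma> \<noteq> y x}" r p "syndrome_monomial r n p" "\<lambda>_. 1"]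
  by (simp add: gerr_eq_sum[abs_def] finite_syndromes polynomial_fun_syndrome_monomial)

lemma Acount_eq_sum:
  "real (Acount r n p y \<pi> s x) = (\<Sum>\<gamma>\<in>{\<gamma> \<in> syndromes r n p. \<pi> x \<gamma> \<noteq> y x}. if wt n \<gamma> = s then 1 else 0)"
proof -
  let ?E = "{\<gamma> \<in> syndromes r n p. \<pi> x \<gamma> \<noteq> y x}"
  have "{\<gamma> \<in> syndromes r n p. wt n \<gamma> = s \<and> \<pi> x \<gamma> \<noteq> y x} = {\<gamma> \<in> ?E. wt n \<gamma> = s}"
    by auto
  then have "real (Acount r n p y \<pi> s x) = (\<Sum>\<gamma>\<in>{\<gamma> \<in> ?E. wt n \<gamma> = s}. 1)"
    by (simp add: Acount_def)
  also have "\<dots> = (\<Sum>\<gamma>\<in>?E. if wt n \<gamma> = s then 1 else 0)"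
    using finite_syndromes[of r n p] by (intro sum.inter_filter) simp
  finally show ?thesis .
qed

lemma mderiv_gerr_at_zero:
  assumes "\<pi> x (\<lambda>a c. 0) = y x" "i \<in> multi_indices r p"
  shows "mderiv r p i (gerr r n p y \<pi> x) (\<lambda>_. 0) =
    (\<Sum>s\<in>{s. mle s i \<and> s \<noteq> (\<lambda>_. 0)}. Scoef r n p i s * real (Acount r n p y \<pi> s x))"
proof -
  let ?E = "{\<gamma> \<in> syndromes r n p. \<pi> x \<gamma> \<noteq> y x}"
  let ?T = "{s. mle s i \<and> s \<noteq> (\<lambda>_. 0)}"
  have fin: "finite ?E" "finite ?T"
    using finite_syndromes finite_subset[OF _ finite_mle[OF assms(2)]] by auto
  have "mderiv r p i (gerr r n p y \<pi> x) (\<lambda>_. 0) = (\<Sum>\<gamma>\<in>?E. 1 * mderiv r p i (syndrome_monomial r n p \<gamma>) (\<lambda>_. 0))"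
    using mderiv_sum_at_zero[of ?E r p "syndrome_monomial r n p" i "\<lambda>_. 1"] fin assms(2)
    by (simp add: gerr_eq_sum[abs_def] polynomial_fun_syndrome_monomial)
  also have "\<dots> = (\<Sum>\<gamma>\<in>?E. \<Sum>s\<in>?T. if wt n \<gamma> = s then Scoef r n p i s else 0)"
  proof (intro sum.cong refl)
    fix \<gamma>
    assume "\<gamma> \<in> ?E"
    moreover from this have "wt n \<gamma> \<noteq> (\<lambda>_. 0)"
      using assms(1) wt_eq_zero_imp_zero_syndrome by blast
    ultimately show "1 * mderiv r p i (syndrome_monomial r n p \<gamma>) (\<lambda>_. 0) =
        (\<Sum>s\<in>?T. if wt n \<gamma> = s then Scoef r n p i s else 0)"
      using fin assms(2) by (simp add: mderiv_syndrome_monomial_at_zero)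
  qed
  also have "\<dots> = (\<Sum>s\<in>?T. \<Sum>\<gamma>\<in>?E. if wt n \<gamma> = s then Scoef r n p i s else 0)"
    by (rule sum.swap)
  also have "\<dots> = (\<Sum>s\<in>?T. Scoef r n p i s * real (Acount r n p y \<pi> s x))"
    by (intro sum.cong refl) (auto simp: Acount_eq_sum sum_distrib_left intro!: sum.cong)
  finally show ?thesis .
qed

lemma gerr_at_zero:
  assumes "\<pi> x (\<lambda>a c. 0) = y x"
  shows "gerr r n p y \<pi> x (\<lambda>_. 0) = 0"
proof -
  have no_index: "{s. mle s (\<lambda>_. 0) \<and> s \<noteq> (\<lambda>_. 0)} = {}"
    by (auto simp: mle_def fun_eq_iff)
  show ?thesis
    using mderiv_gerr_at_zero[where i = "\<lambda>_. 0" and r = r and p = p and n = n and y = y and \<pi> = \<pi> and x = x, OF assms]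
    by (simp only: mderiv_zero_index no_index sum.empty multi_indices_zero simp_thms)
qed

lemma mderiv_weighted_sum_of_squares_at_zero:
  assumes "finite X" "\<And>x. x \<in> X \<Longrightarrow> polynomial_fun r p (G x)" "\<And>x. x \<in> X \<Longrightarrow> G x (\<lambda>_. 0) = 0"
    and "k \<in> multi_indices r p"
  shows "mderiv r p k (\<lambda>w. \<Sum>x\<in>X. q x * (G x w)\<^sup>2) (\<lambda>_. 0) =
    (\<Sum>i\<in>{i. mle i k \<and> i \<noteq> (\<lambda>_. 0) \<and> (\<lambda>u. k u - i u) \<noteq> (\<lambda>_. 0)}. \<Sum>x\<in>X.
       q x * (Ccoef r p i (\<lambda>u. k u - i u) * mderiv r p i (G x) (\<lambda>_. 0) * mderiv r p (\<lambda>u. k u - i u) (G x) (\<lambda>_. 0)))"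
proof -
  let ?I = "{i. mle i k}"
  let ?I' = "{i. mle i k \<and> i \<noteq> (\<lambda>_. 0) \<and> (\<lambda>u. k u - i u) \<noteq> (\<lambda>_. 0)}"
  let ?t = "\<lambda>x i. Ccoef r p i (\<lambda>u. k u - i u) * mderiv r p i (G x) (\<lambda>_. 0) * mderiv r p (\<lambda>u. k u - i u) (G x) (\<lambda>_. 0)"
  have "mderiv r p k (\<lambda>w. \<Sum>x\<in>X. q x * (G x w)\<^sup>2) (\<lambda>_. 0) =
      (\<Sum>x\<in>X. q x * mderiv r p k (\<lambda>w. G x w * G x w) (\<lambda>_. 0))"
    using mderiv_sum_at_zero[of X r p "\<lambda>x w. G x w * G x w" k q] assms(1,2,4)
    by (simp add: power2_eq_square polynomial_fun_mult)
  also have "\<dots> = (\<Sum>x\<in>X. q x * (\<Sum>i\<in>?I. ?t x i))"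
    using assms(2,4) by (simp add: mderiv_mult_at_zero)
  also have "\<dots> = (\<Sum>x\<in>X. q x * (\<Sum>i\<in>?I'. ?t x i))"
  proof (rule sum.cong[OF refl])
    fix x
    assume "x \<in> X"
    then have "?t x i = 0" if "i \<in> ?I - ?I'" for i
      \<comment> \<open>one factor is \<open>D^0 G x = G x\<close> at \<open>0\<close>\<close>
      using that assms(3) by auto
    then have "(\<Sum>i\<in>?I. ?t x i) = (\<Sum>i\<in>?I'. ?t x i)"
      using finite_mle[OF assms(4)] by (intro sum.mono_neutral_right) auto
    then show "q x * (\<Sum>i\<in>?I. ?t x i) = q x * (\<Sum>i\<in>?I'. ?t x i)"
      by simp
  qed
  also have "\<dots> = (\<Sum>i\<in>?I'. \<Sum>x\<in>X. q x * ?t x i)"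
    unfolding sum_distrib_left by (rule sum.swap)
  finally show ?thesis .
qed

lemma sum_weighted_product_of_sums:
  fixes C :: real
  shows "(\<Sum>x\<in>X. q x * (C * (\<Sum>s\<in>S. f s * A s x) * (\<Sum>t\<in>T. g t * B t x))) =
    (\<Sum>s\<in>S. \<Sum>t\<in>T. C * f s * g t * (\<Sum>x\<in>X. q x * A s x * B t x))"
proof -
  have "(\<Sum>x\<in>X. q x * (C * (\<Sum>s\<in>S. f s * A s x) * (\<Sum>t\<in>T. g t * B t x))) =
      (\<Sum>x\<in>X. \<Sum>s\<in>S. \<Sum>t\<in>T. C * f s * g t * (q x * A s x * B t x))"
    by (simp add: sum_product sum_distrib_left sum_distrib_right mult_ac)
  also have "\<dots> = (\<Sum>s\<in>S. \<Sum>t\<in>T. \<Sum>x\<in>X. C * f s * g t * (q x * A s x * B t x))"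
    by (subst sum.swap) (simp add: sum.swap[of _ X])
  also have "\<dots> = (\<Sum>s\<in>S. \<Sum>t\<in>T. C * f s * g t * (\<Sum>x\<in>X. q x * A s x * B t x))"
    by (simp add: sum_distrib_left)
  finally show ?thesis .
qed

theorem mainTheorem7:
  fixes r :: nat and n p :: "nat \<Rightarrow> nat"
    and q :: "'i::finite \<Rightarrow> real" and y :: "'i \<Rightarrow> 'q::finite"
    and \<pi> :: "'i \<Rightarrow> (nat \<Rightarrow> nat \<Rightarrow> nat) \<Rightarrow> 'q"
    and k :: "nat \<times> nat \<Rightarrow> nat"
  assumes "r \<ge> 1"
    and "\<forall>a\<in>{1..r}. n a \<ge> 1 \<and> p a \<ge> 1"
    and "\<forall>x. q x \<ge> 0" and "(\<Sum>x\<in>UNIV. q x) = 1"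
    and "\<forall>x. \<pi> x (\<lambda>a c. 0) = y x"
    and "k \<in> multi_indices r p" and "msum r p k > 0"
  shows "mderiv r p k (Hfun r n p q y \<pi>) (\<lambda>_. 0) =
    (\<Sum>i\<in>{i. mle i k \<and> i \<noteq> (\<lambda>_. 0) \<and> (\<lambda>u. k u - i u) \<noteq> (\<lambda>_. 0)}.
       let j = (\<lambda>u. k u - i u) in
       (\<Sum>s\<in>{s. mle s i \<and> s \<noteq> (\<lambda>_. 0)}. \<Sum>t\<in>{t. mle t j \<and> t \<noteq> (\<lambda>_. 0)}.
          Ccoef r p i j * Scoef r n p i s * Scoef r n p j t
          * (\<Sum>x\<in>UNIV. q x * real (Acount r n p y \<pi> s x) * real (Acount r n p y \<pi> t x))))"
proof -
  have H: "Hfun r n p q y \<pi> = (\<lambda>w. \<Sum>x\<in>UNIV. q x * (gerr r n p y \<pi> x w)\<^sup>2)"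
    by (simp add: fun_eq_iff Hfun_def)
  have expand: "(\<Sum>x\<in>UNIV. q x * (Ccoef r p i j * mderiv r p i (gerr r n p y \<pi> x) (\<lambda>_. 0) *
        mderiv r p j (gerr r n p y \<pi> x) (\<lambda>_. 0))) =
      (\<Sum>s\<in>{s. mle s i \<and> s \<noteq> (\<lambda>_. 0)}. \<Sum>t\<in>{t. mle t j \<and> t \<noteq> (\<lambda>_. 0)}.
        Ccoef r p i j * Scoef r n p i s * Scoef r n p j t
        * (\<Sum>x\<in>UNIV. q x * real (Acount r n p y \<pi> s x) * real (Acount r n p y \<pi> t x)))"
    if "i \<in> multi_indices r p" "j \<in> multi_indices r p" for i j
    using assms(5) that by (simp add: mderiv_gerr_at_zero sum_weighted_product_of_sums)
  show ?thesis
    unfolding H Let_def using assms(5,6)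
    by (subst mderiv_weighted_sum_of_squares_at_zero)
      (auto simp: polynomial_fun_gerr gerr_at_zero expand multi_indices_mle[OF assms(6)] multi_indices_diff
        intro!: sum.cong)
qed

end
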